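(* Let $G$ be a graph on $n\ge 3$ vertices, and let $f:\binom{V(G)}{2}\to\mathbb{Z}_{\ge 0}$ be such that for all distinct $u,v\in V(G)$, there are $f(u,v)$ disjoint super-paths in $G$ connecting $u$ and $v$. (a) Then $e(G)\ge\left\lceil\frac{w(f)}{n-2}\right\rceil$. (b) Suppose that $e(G)\ge 1$ and $e(G)=\left\lceil\frac{w(f)}{n-2}\right\rceil$. Then $\Delta(G)-\delta(G)\le 1$, and one of the following holds: (i) $G$ is regular and $\Delta(G)=\delta(G)\ge 2$; (ii) $G$ has exactly one vertex of degree $\delta(G)$, and $\Delta(G)\ge 3$, $\delta(G)\ge 2$; (iii) $G$ has exactly one vertex of degree $\Delta(G)$, and $\Delta(G)\ge 4$, $\delta(G)\ge 3$. Moreover, \[ e(G)=\left\lceil\frac{w(f)}{n-2}\right\rceil=\left\lceil\frac{w(m_G)}{n-2}\right\rceil=\frac{w(m_G)+s}{n-2}, \] where $s=0$ if $G$ is regular, and $s=\frac{n-1}{2}$ otherwise.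
   Context: All graphs are finite, simple and undirected; $\delta(G)$, $\Delta(G)$ are the minimum and maximum degree. A super-path is a path of length at least two. Paths are called disjoint if they are internally vertex-disjoint. For $f:\binom{V(G)}{2}\to\mathbb{Z}_{\ge 0}$ write $f(u,v)=f(\{u,v\})$ and $w(f)=\sum_{\{u,v\}\in\binom{V(G)}{2}} f(u,v)$. Define $m_G:\binom{V(G)}{2}\to\mathbb{Z}_{\ge0}$ by $m_G(u,v)=\min(\deg_G(u),\deg_G(v))-1$ if $uv\in E(G)$, and $m_G(u,v)=\min(\deg_G(u),\deg_G(v))$ if $uv\notin E(G)$. *)

theory Defs
  imports Complex_Main
begin

definition simple_graph :: "'a set \<Rightarrow> 'a set set \<Rightarrow> bool" where
  "simple_graph V E \<longleftrightarrow> finite V \<and> (\<forall>e\<in>E. e \<subseteq> V \<and> card e = 2)"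

definition adj :: "'a set set \<Rightarrow> 'a \<Rightarrow> 'a \<Rightarrow> bool" where
  "adj E u v \<longleftrightarrow> {u, v} \<in> E"

definition degree :: "'a set set \<Rightarrow> 'a \<Rightarrow> nat" where
  "degree E v = card {e \<in> E. v \<in> e}"

definition min_degree :: "'a set \<Rightarrow> 'a set set \<Rightarrow> nat" where
  "min_degree V E = Min (degree E ` V)"

definition max_degree :: "'a set \<Rightarrow> 'a set set \<Rightarrow> nat" where
  "max_degree V E = Max (degree E ` V)"

definition is_path :: "'a set \<Rightarrow> 'a set set \<Rightarrow> 'a list \<Rightarrow> 'a \<Rightarrow> 'a \<Rightarrow> bool" where
  "is_path V E p u v \<longleftrightarrow> p \<noteq> [] \<and> hd p = u \<and> last p = v \<and> distinct p \<and> set p \<subseteq> V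
     \<and> (\<forall>i. Suc i < length p \<longrightarrow> adj E (p ! i) (p ! Suc i))"

text \<open>Super-path: path of length (number of edges) at least two.\<close>
definition super_path :: "'a set \<Rightarrow> 'a set set \<Rightarrow> 'a list \<Rightarrow> 'a \<Rightarrow> 'a \<Rightarrow> bool" where
  "super_path V E p u v \<longleftrightarrow> is_path V E p u v \<and> length p \<ge> 3"

definition interior :: "'a list \<Rightarrow> 'a set" where
  "interior p = set (butlast (tl p))"

definition has_disjoint_super_paths :: "'a set \<Rightarrow> 'a set set \<Rightarrow> 'a \<Rightarrow> 'a \<Rightarrow> nat \<Rightarrow> bool" where
  "has_disjoint_super_paths V E u v k \<longleftrightarrow>
     (\<exists>P :: nat \<Rightarrow> 'a list. (\<forall>i<k. super_path V E (P i) u v) \<and>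
        (\<forall>i<k. \<forall>j<k. i \<noteq> j \<longrightarrow> interior (P i) \<inter> interior (P j) = {}))"

definition weight :: "'a set \<Rightarrow> ('a set \<Rightarrow> nat) \<Rightarrow> nat" where
  "weight V f = (\<Sum>e\<in>{e. e \<subseteq> V \<and> card e = 2}. f e)"

definition mG :: "'a set set \<Rightarrow> 'a set \<Rightarrow> nat" where
  "mG E e = (let d = Min (degree E ` e) in if e \<in> E then d - 1 else d)"

end

theory Submission
  imports Defs
begin

text \<open>
  Each of the f(u,v) disjoint super-paths from u to v leaves u through its own neighbour, which
  differs from v and has degree at least 2; the same holds at v. Hence f \<le> m_G pointwise.
  Writing min a b = (a + b - |a - b|) / 2 and summing over all pairs gives
  w(m_G) = (n - 2) e(G) - D / 4 with D = \<Sum>u. \<Sum>v. |d(u) - d(v)|, which proves (a).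

  In the equality case D < 4 (n - 2). Since every level set L of the degree function contributes
  at least 2 |L| (n - |L|) to D, all vertices but one share a degree d0, the exceptional one
  has degree d0 + 1 or d0 - 1, D = 2 (n - 1) and n \<ge> 4. The small values of d0 are excluded by the
  parity of the degree sum and by the observation that w(f) \<le> 1 when at most one vertex has
  degree 2 and all others have degree at most 1.
\<close>

lemma ceiling_divide_eq_of_deficit:
  fixes N s w :: real
  assumes "0 < N" "0 \<le> s" "s < N" "w = N * real e - s"
  shows "\<lceil>w / N\<rceil> = int e" "real e = (w + s) / N"
proof -
  have "w / N = real e - s / N"
    using assms(1,4) by (simp add: field_simps)
  moreover have "0 \<le> s / N" "s / N < 1"
    using assms(1-3) by simp_all
  ultimately show "\<lceil>w / N\<rceil> = int e"
    by (simp add: ceiling_eq_iff)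
  show "real e = (w + s) / N"
    using assms(1,4) by (simp add: field_simps)
qed

lemma less_of_ceiling_divide_eq:
  fixes e w N :: nat
  assumes "0 < N" "1 \<le> e" "int e = \<lceil>real w / real N\<rceil>"
  shows "(e - 1) * N < w"
proof -
  have "real e - 1 < real w / real N"
    using ceiling_correct[of "real w / real N"] assms(3) by simp
  then have "real ((e - 1) * N) < real w"
    using assms(1,2) by (simp add: field_simps)
  then show ?thesis
    by (simp only: of_nat_less_iff)
qed

lemma mult_diff_lt_imp_extreme:
  fixes k n :: nat
  assumes "k * (n - k) < 2 * (n - 2)" "0 < k"
  shows "k = 1 \<or> n - 1 \<le> k"
proof (rule ccontr)
  assume not_extreme: "\<not> ?thesis"
  define a b where "a = k - 2" and "b = n - k - 2"
  have "k = a + 2" "n = a + b + 4"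
    using not_extreme assms(2) by (auto simp: a_def b_def)
  then show False
    using assms(1) by (simp add: algebra_simps)
qed

lemma sum_incident_eq_double_sum:
  fixes g :: "'a set \<Rightarrow> 'b::comm_semiring_1"
  assumes "finite V" "\<And>e. e \<in> F \<Longrightarrow> e \<subseteq> V \<and> card e = 2"
  shows "(\<Sum>u\<in>V. \<Sum>e\<in>{e \<in> F. u \<in> e}. g e) = 2 * (\<Sum>e\<in>F. g e)"
proof -
  have "F \<subseteq> Pow V"
    using assms(2) by auto
  then have "finite F"
    using assms(1) finite_subset by blast
  have "(\<Sum>u\<in>V. \<Sum>e\<in>{e \<in> F. u \<in> e}. g e) = (\<Sum>u\<in>V. \<Sum>e\<in>F. if u \<in> e then g e else 0)"
    using \<open>finite F\<close> by (simp add: sum.inter_filter)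
  also have "\<dots> = (\<Sum>e\<in>F. \<Sum>u\<in>V. if u \<in> e then g e else 0)"
    by (rule sum.swap)
  also have "\<dots> = (\<Sum>e\<in>F. of_nat (card (V \<inter> e)) * g e)"
    using assms(1) by (simp add: sum.If_cases Int_def)
  also have "\<dots> = (\<Sum>e\<in>F. 2 * g e)"
    using assms(2) by (intro sum.cong refl) (simp add: Int_absorb1)
  finally show ?thesis by (simp add: sum_distrib_left)
qed

lemma double_weight_eq_sum:
  assumes "finite V"
  shows "2 * weight V h = (\<Sum>u\<in>V. \<Sum>v\<in>V - {u}. h {u, v})"
proof -
  have "{e \<in> {e. e \<subseteq> V \<and> card e = 2}. u \<in> e} = (\<lambda>v. {u, v}) ` (V - {u})" if "u \<in> V" for u
    using that by (fastforce simp: card_2_iff insert_commute)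
  moreover have "inj_on (\<lambda>v. {u, v}) (V - {u})" for u
    by (auto simp: inj_on_def doubleton_eq_iff)
  ultimately have "(\<Sum>v\<in>V - {u}. h {u, v}) = (\<Sum>e\<in>{e \<in> {e. e \<subseteq> V \<and> card e = 2}. u \<in> e}. h e)"
    if "u \<in> V" for u
    using that by (simp add: sum.reindex)
  then show ?thesis
    unfolding weight_def using sum_incident_eq_double_sum[OF assms, of "{e. e \<subseteq> V \<and> card e = 2}" h]
    by simp
qed

section \<open>Spread of a vertex labelling\<close>

definition spread :: "'a set \<Rightarrow> ('a \<Rightarrow> nat) \<Rightarrow> real" where
  "spread V d = (\<Sum>u\<in>V. \<Sum>v\<in>V. \<bar>real (d u) - real (d v)\<bar>)"

lemma sum_min_eq_abs:
  assumes "finite V"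
  shows "(\<Sum>v\<in>V. min (real a) (real (d v))) =
    (real (card V) * real a + (\<Sum>v\<in>V. real (d v)) - (\<Sum>v\<in>V. \<bar>real a - real (d v)\<bar>)) / 2"
proof -
  have "(\<Sum>v\<in>V. min (real a) (real (d v))) = (\<Sum>v\<in>V. (real a + real (d v) - \<bar>real a - real (d v)\<bar>) / 2)"
    by (intro sum.cong refl) (auto simp: min_def abs_if)
  then show ?thesis
    by (simp add: sum_divide_distrib[symmetric] sum_subtractf sum.distrib)
qed

lemma spread_nonneg: "0 \<le> spread V d"
  unfolding spread_def by (intro sum_nonneg) auto

lemma sum_card_differ_le_spread:
  assumes "finite V"
  shows "real (\<Sum>u\<in>V. card {v \<in> V. d v \<noteq> d u}) \<le> spread V d"
proof -
  have "real (card {v \<in> V. d v \<noteq> d u}) \<le> (\<Sum>v\<in>V. \<bar>real (d u) - real (d v)\<bar>)" for u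
  proof -
    have "real (card {v \<in> V. d v \<noteq> d u}) = (\<Sum>v\<in>V. if d v \<noteq> d u then 1 else 0)"
      using assms by (simp add: sum.inter_filter[symmetric])
    also have "\<dots> \<le> (\<Sum>v\<in>V. \<bar>real (d u) - real (d v)\<bar>)"
      by (intro sum_mono) auto
    finally show ?thesis .
  qed
  then show ?thesis
    unfolding spread_def of_nat_sum by (rule sum_mono)
qed

lemma level_set_cut_le:
  assumes "finite V"
  shows "2 * card {v \<in> V. d v = x} * card {v \<in> V. d v \<noteq> x} \<le> (\<Sum>u\<in>V. card {v \<in> V. d v \<noteq> d u})"
proof -
  let ?L = "{v \<in> V. d v = x}" and ?R = "{v \<in> V. d v \<noteq> x}"
  have "(\<Sum>u\<in>V. card {v \<in> V. d v \<noteq> d u})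
      = (\<Sum>u\<in>?L. card {v \<in> V. d v \<noteq> d u}) + (\<Sum>u\<in>?R. card {v \<in> V. d v \<noteq> d u})"
    using assms by (subst sum.union_disjoint[symmetric]) (auto intro: sum.cong)
  moreover have "(\<Sum>u\<in>?L. card {v \<in> V. d v \<noteq> d u}) = card ?L * card ?R"
    by simp
  moreover have "(\<Sum>u\<in>?R. card ?L) \<le> (\<Sum>u\<in>?R. card {v \<in> V. d v \<noteq> d u})"
    using assms by (intro sum_mono card_mono) auto
  ultimately show ?thesis
    by (simp add: mult.commute)
qed

lemma spread_single_outlier:
  assumes "finite V" "c \<in> V" and others: "\<And>v. v \<in> V - {c} \<Longrightarrow> d v = d0"
  shows "spread V d = 2 * (real (card V) - 1) * \<bar>real (d c) - real d0\<bar>"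
proof -
  let ?t = "\<bar>real (d c) - real d0\<bar>" and ?m = "real (card V) - 1"
  have "1 \<le> card V"
    using assms(1,2) by (auto simp: Suc_le_eq card_gt_0_iff)
  then have card_rest: "real (card (V - {c})) = ?m"
    using assms(2) by simp
  have row: "(\<Sum>v\<in>V. \<bar>real (d u) - real (d v)\<bar>) = \<bar>real (d u) - real (d c)\<bar> + ?m * \<bar>real (d u) - real d0\<bar>"
    for u
  proof -
    have "(\<Sum>v\<in>V - {c}. \<bar>real (d u) - real (d v)\<bar>) = (\<Sum>v\<in>V - {c}. \<bar>real (d u) - real d0\<bar>)"
      using others by (intro sum.cong) auto
    then show ?thesis
      by (simp add: sum.remove[OF assms(1,2)] card_rest)
  qed
  have "spread V d = (\<Sum>v\<in>V. \<bar>real (d c) - real (d v)\<bar>) + (\<Sum>u\<in>V - {c}. \<Sum>v\<in>V. \<bar>real (d u) - real (d v)\<bar>)"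
    unfolding spread_def by (rule sum.remove[OF assms(1,2)])
  also have "(\<Sum>u\<in>V - {c}. \<Sum>v\<in>V. \<bar>real (d u) - real (d v)\<bar>) = (\<Sum>u\<in>V - {c}. ?t)"
  proof (rule sum.cong)
    fix u assume "u \<in> V - {c}"
    then show "(\<Sum>v\<in>V. \<bar>real (d u) - real (d v)\<bar>) = ?t"
      using row[of u] others by (simp add: abs_minus_commute)
  qed simp
  finally show ?thesis
    by (simp add: row card_rest)
qed

lemma sum_single_outlier:
  assumes "finite V" "c \<in> V" "\<And>v. v \<in> V - {c} \<Longrightarrow> d v = d0"
  shows "(\<Sum>v\<in>V. d v) = d c + (card V - 1) * d0"
  using assms by (simp add: sum.remove[OF assms(1,2)])

lemma small_spread_imp_outlier:
  assumes fin: "finite V" and n: "3 \<le> card V" and small: "spread V d < 4 * (real (card V) - 2)"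
    and "u \<in> V" "v \<in> V" "d u \<noteq> d v"
  obtains c d0 where "c \<in> V" "\<And>w. w \<in> V - {c} \<Longrightarrow> d w = d0" "d c \<noteq> d0"
proof -
  let ?L = "\<lambda>w. {v \<in> V. d v = d w}"
  let ?N = "\<Sum>w\<in>V. card {v \<in> V. d v \<noteq> d w}"
  have complement: "card {v \<in> V. d v \<noteq> d w} = card V - card (?L w)" for w
  proof -
    have "{v \<in> V. d v \<noteq> d w} = V - ?L w"
      by auto
    then show ?thesis
      using fin by (simp add: card_Diff_subset)
  qed
  have "real ?N < real (4 * (card V - 2))"
    using sum_card_differ_le_spread[OF fin, of d] small n by simp
  then have N_lt: "?N < 4 * (card V - 2)"
    by linarith
  have level: "card (?L w) = 1 \<or> card V - 1 \<le> card (?L w)" if "w \<in> V" for w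
  proof (rule mult_diff_lt_imp_extreme)
    show "card (?L w) * (card V - card (?L w)) < 2 * (card V - 2)"
      using level_set_cut_le[OF fin, of d "d w"] N_lt by (simp add: complement)
    show "0 < card (?L w)"
      using that fin by (auto simp: card_gt_0_iff)
  qed
  show thesis
  proof (cases "\<exists>w\<in>V. card V - 1 \<le> card (?L w)")
    case True
    then obtain w where w: "w \<in> V" "card V - 1 \<le> card (?L w)"
      by blast
    have "u \<notin> ?L w \<or> v \<notin> ?L w"
      using assms(6) by auto
    then have "?L w \<subset> V"
      using assms(4,5) by blast
    then have "card (?L w) < card V"
      by (rule psubset_card_mono[OF fin])
    then have "card (V - ?L w) = 1"
      using w fin by (simp add: card_Diff_subset)
    then obtain c where "V - ?L w = {c}"
      by (auto simp: card_1_singleton_iff)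
    then show thesis
      by (intro that[of c "d w"]) auto
  next
    case False
    then have "card {v \<in> V. d v \<noteq> d w} = card V - 1" if "w \<in> V" for w
      using level[OF that] that by (simp add: complement)
    then have "?N = card V * (card V - 1)"
      by simp
    moreover obtain m where "card V = m + 3"
      using n by (metis add.commute le_add_diff_inverse)
    ultimately show thesis
      using N_lt by (simp add: algebra_simps)
  qed
qed

lemma small_spread_imp_near_regular:
  assumes fin: "finite V" and n: "3 \<le> card V" and small: "spread V d < 4 * (real (card V) - 2)"
    and "u \<in> V" "v \<in> V" "d u \<noteq> d v"
  obtains c d0 where "c \<in> V" "\<And>w. w \<in> V - {c} \<Longrightarrow> d w = d0" "d c = d0 + 1 \<or> d0 = d c + 1"
    "spread V d = 2 * (real (card V) - 1)" "4 \<le> card V"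
proof -
  obtain c d0 where c: "c \<in> V" and others: "\<And>w. w \<in> V - {c} \<Longrightarrow> d w = d0" and "d c \<noteq> d0"
    using small_spread_imp_outlier[OF assms] by blast
  have spread: "spread V d = 2 * (real (card V) - 1) * \<bar>real (d c) - real d0\<bar>"
    using spread_single_outlier[OF fin c others] .
  have "\<bar>real (d c) - real d0\<bar> < 2"
  proof (rule ccontr)
    assume "\<not> ?thesis"
    then have "2 * (real (card V) - 1) * 2 \<le> spread V d"
      unfolding spread using n by (intro mult_left_mono) auto
    then show False
      using small by (simp add: algebra_simps)
  qed
  then have "d c < d0 + 2" "d0 < d c + 2"
    by linarith+
  then have step: "d c = d0 + 1 \<or> d0 = d c + 1"
    using \<open>d c \<noteq> d0\<close> by presburger
  then have spread_eq: "spread V d = 2 * (real (card V) - 1)"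
    using spread by auto
  then have "3 < real (card V)"
    using small by (simp add: algebra_simps)
  then have "4 \<le> card V"
    by simp
  then show thesis
    using that c others step spread_eq by blast
qed

section \<open>Neighbourhoods, degrees and the weight of m_G\<close>

definition neighbors :: "'a set set \<Rightarrow> 'a \<Rightarrow> 'a set" where
  "neighbors E u = {v. {u, v} \<in> E}"

lemma neighbors_sym: "v \<in> neighbors E u \<longleftrightarrow> u \<in> neighbors E v"
  by (simp add: neighbors_def insert_commute)

context
  fixes V :: "'a set" and E :: "'a set set"
  assumes G: "simple_graph V E"
begin

lemma finite_vertices: "finite V"
  using G by (simp add: simple_graph_def)

lemma finite_edges: "finite E"
proof -
  have "E \<subseteq> Pow V"
    using G by (auto simp: simple_graph_def)
  then show ?thesis
    using finite_vertices finite_subset by blast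
qed

lemma edge_endpoints: "{u, v} \<in> E \<Longrightarrow> u \<in> V \<and> v \<in> V \<and> u \<noteq> v"
  using G by (cases "u = v") (auto simp: simple_graph_def)

lemma neighbors_subset: "neighbors E u \<subseteq> V - {u}"
  using edge_endpoints by (auto simp: neighbors_def)

lemma finite_neighbors: "finite (neighbors E u)"
  using neighbors_subset finite_vertices by (meson finite_Diff finite_subset)

lemma degree_eq_card_neighbors: "degree E u = card (neighbors E u)"
proof -
  have "{e \<in> E. u \<in> e} = (\<lambda>v. {u, v}) ` neighbors E u"
    using G by (fastforce simp: neighbors_def simple_graph_def card_2_iff insert_commute)
  moreover have "inj_on (\<lambda>v. {u, v}) (neighbors E u)"
    by (auto simp: inj_on_def doubleton_eq_iff)
  ultimately show ?thesis unfolding degree_def by (simp add: card_image)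
qed

lemma degree_pos_if_edge: "{u, v} \<in> E \<Longrightarrow> 1 \<le> degree E u"
  using finite_neighbors by (force simp: degree_eq_card_neighbors neighbors_def Suc_le_eq card_gt_0_iff)

lemma card_neighbors_minus: "card (neighbors E u - {v}) = degree E u - (if {u, v} \<in> E then 1 else 0)"
  by (simp add: degree_eq_card_neighbors card_Diff_singleton_if neighbors_def)

lemma sum_degree_eq: "(\<Sum>u\<in>V. degree E u) = 2 * card E"
  using sum_incident_eq_double_sum[OF finite_vertices, of E "\<lambda>_. 1::nat"] G
  by (simp add: degree_def simple_graph_def)

lemma sum_degree_real: "(\<Sum>u\<in>V. real (degree E u)) = 2 * real (card E)"
  using arg_cong[OF sum_degree_eq, of real] by simp

lemma min_degree_le: "v \<in> V \<Longrightarrow> min_degree V E \<le> degree E v"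
  by (simp add: min_degree_def finite_vertices)

lemma degree_le_max_degree: "v \<in> V \<Longrightarrow> degree E v \<le> max_degree V E"
  by (simp add: max_degree_def finite_vertices)

lemma degrees_of_single_outlier:
  assumes "c \<in> V" "\<And>v. v \<in> V - {c} \<Longrightarrow> degree E v = d0" "2 \<le> card V" "degree E c \<noteq> d0"
  shows "min_degree V E = min (degree E c) d0" "max_degree V E = max (degree E c) d0"
    "{v \<in> V. degree E v = degree E c} = {c}"
proof -
  have "V - {c} \<noteq> {}"
  proof
    assume "V - {c} = {}"
    then have "V = {c}"
      using assms(1) by auto
    then show False
      using assms(3) by simp
  qed
  then have "degree E ` V = {degree E c, d0}"
    using assms(1,2) by auto
  then show "min_degree V E = min (degree E c) d0" "max_degree V E = max (degree E c) d0"
    by (simp_all add: min_degree_def max_degree_def)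
  show "{v \<in> V. degree E v = degree E c} = {c}"
  proof (intro equalityI subsetI)
    fix x assume "x \<in> {v \<in> V. degree E v = degree E c}"
    then show "x \<in> {c}"
      using assms(2)[of x] assms(4) by (cases "x = c") auto
  qed (use assms(1) in auto)
qed

lemma mG_pair:
  assumes "u \<in> V" "v \<in> V" "u \<noteq> v"
  shows "real (mG E {u, v}) =
    min (real (degree E u)) (real (degree E v)) - (if {u, v} \<in> E then 1 else 0)"
proof (cases "{u, v} \<in> E")
  case True
  then have "1 \<le> degree E u" "1 \<le> degree E v"
    using degree_pos_if_edge[of u v] degree_pos_if_edge[of v u] by (auto simp: insert_commute)
  then show ?thesis
    using True by (simp add: mG_def min_def)
qed (simp add: mG_def min_def)

lemma sum_mG_at_vertex:
  assumes "u \<in> V"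
  shows "(\<Sum>v\<in>V - {u}. real (mG E {u, v})) =
    (real (card V) - 4) * real (degree E u) / 2 + real (card E)
    - (\<Sum>v\<in>V. \<bar>real (degree E u) - real (degree E v)\<bar>) / 2"
proof -
  let ?d = "\<lambda>v. real (degree E v)"
  have "{v \<in> V - {u}. {u, v} \<in> E} = neighbors E u"
    using neighbors_subset by (auto simp: neighbors_def)
  then have adjacent: "(\<Sum>v\<in>V - {u}. if {u, v} \<in> E then 1 else 0 :: real) = ?d u"
    using sum.inter_filter[of "V - {u}" "\<lambda>_. 1 :: real" "\<lambda>v. {u, v} \<in> E"] finite_vertices
    by (simp only: degree_eq_card_neighbors finite_Diff) simp
  have "(\<Sum>v\<in>V - {u}. real (mG E {u, v}))
      = (\<Sum>v\<in>V - {u}. min (?d u) (?d v) - (if {u, v} \<in> E then 1 else 0))"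
    using assms mG_pair by (intro sum.cong) auto
  also have "\<dots> = (\<Sum>v\<in>V - {u}. min (?d u) (?d v)) - (\<Sum>v\<in>V - {u}. if {u, v} \<in> E then 1 else 0)"
    by (rule sum_subtractf)
  also have "(\<Sum>v\<in>V - {u}. min (?d u) (?d v)) = (\<Sum>v\<in>V. min (?d u) (?d v)) - ?d u"
    using assms finite_vertices by (simp add: sum_diff1)
  also have "(\<Sum>v\<in>V. min (?d u) (?d v))
      = (real (card V) * ?d u + 2 * real (card E) - (\<Sum>v\<in>V. \<bar>?d u - ?d v\<bar>)) / 2"
    using sum_min_eq_abs[OF finite_vertices, of "degree E u" "degree E"] sum_degree_real by simp
  finally show ?thesis
    using adjacent by (simp add: field_simps)
qed

lemma weight_mG_eq:
  "real (weight V (mG E)) = (real (card V) - 2) * real (card E) - spread V (degree E) / 4"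
proof -
  have "2 * real (weight V (mG E)) = (\<Sum>u\<in>V. \<Sum>v\<in>V - {u}. real (mG E {u, v}))"
    using arg_cong[OF double_weight_eq_sum[OF finite_vertices, of "mG E"], of real] by simp
  also have "\<dots> = (real (card V) - 4) * (\<Sum>u\<in>V. real (degree E u)) / 2 + real (card V) * real (card E)
      - spread V (degree E) / 2"
    by (simp add: sum_mG_at_vertex spread_def sum_subtractf sum.distrib sum_divide_distrib sum_distrib_left)
  finally show ?thesis
    by (simp add: sum_degree_real field_simps)
qed

section \<open>Disjoint super-paths\<close>

lemma super_path_second_vertex:
  assumes "super_path V E p u v"
  shows "p ! 1 \<in> interior p" "p ! 1 \<in> neighbors E u" "p ! 1 \<noteq> v" "2 \<le> degree E (p ! 1)"
proof -
  have len: "3 \<le> length p" and ends: "p ! 0 = u" "p ! (length p - 1) = v" and "distinct p"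
    and step: "\<And>i. Suc i < length p \<Longrightarrow> {p ! i, p ! Suc i} \<in> E"
    using assms by (auto simp: super_path_def is_path_def adj_def hd_conv_nth last_conv_nth)
  have "butlast (tl p) ! 0 = p ! 1" "0 < length (butlast (tl p))"
    using len by (auto simp: nth_butlast nth_tl)
  then show "p ! 1 \<in> interior p"
    unfolding interior_def by (metis nth_mem)
  show "p ! 1 \<in> neighbors E u"
    using step[of 0] len ends by (simp add: neighbors_def)
  show "p ! 1 \<noteq> v"
    using ends \<open>distinct p\<close> len by (auto simp: nth_eq_iff_index_eq)
  have "0 < length p" "2 < length p"
    using len by auto
  then have "p ! 0 \<noteq> p ! 2"
    using nth_eq_iff_index_eq[OF \<open>distinct p\<close>] by simp
  moreover have "{p ! 0, p ! 2} \<subseteq> neighbors E (p ! 1)"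
    using step[of 0] step[of 1] len by (auto simp: neighbors_def insert_commute numeral_2_eq_2)
  ultimately have "card {p ! 0, p ! 2} \<le> card (neighbors E (p ! 1))"
    by (intro card_mono finite_neighbors)
  then show "2 \<le> degree E (p ! 1)"
    using \<open>p ! 0 \<noteq> p ! 2\<close> by (simp add: degree_eq_card_neighbors)
qed

lemma disjoint_super_paths_le_card_neighbors:
  assumes "has_disjoint_super_paths V E u v k"
  shows "k \<le> card (neighbors E u \<inter> {y. 2 \<le> degree E y} - {v})"
proof -
  obtain P where sp: "\<forall>i<k. super_path V E (P i) u v"
    and disj: "\<forall>i<k. \<forall>j<k. i \<noteq> j \<longrightarrow> interior (P i) \<inter> interior (P j) = {}"
    using assms unfolding has_disjoint_super_paths_def by blast
  have "inj_on (\<lambda>i. P i ! 1) {..<k}"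
  proof (rule inj_onI)
    fix i j assume ij: "i \<in> {..<k}" "j \<in> {..<k}" and same: "P i ! 1 = P j ! 1"
    have "P i ! 1 \<in> interior (P i) \<inter> interior (P j)"
      using super_path_second_vertex(1)[of "P i" u v] super_path_second_vertex(1)[of "P j" u v]
        sp ij same by simp
    then show "i = j"
      using disj ij by auto
  qed
  moreover have "(\<lambda>i. P i ! 1) ` {..<k} \<subseteq> neighbors E u \<inter> {y. 2 \<le> degree E y} - {v}"
  proof
    fix y assume "y \<in> (\<lambda>i. P i ! 1) ` {..<k}"
    then obtain i where "i < k" "y = P i ! 1"
      by auto
    then show "y \<in> neighbors E u \<inter> {y. 2 \<le> degree E y} - {v}"
      using super_path_second_vertex(2-4)[of "P i" u v] sp by simp
  qed
  ultimately have "card {..<k} \<le> card (neighbors E u \<inter> {y. 2 \<le> degree E y} - {v})"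
    by (rule card_inj_on_le) (simp add: finite_neighbors)
  then show ?thesis
    by simp
qed

context
  fixes f :: "'a set \<Rightarrow> nat"
  assumes paths: "\<And>u v. u \<in> V \<Longrightarrow> v \<in> V \<Longrightarrow> u \<noteq> v \<Longrightarrow>
                    has_disjoint_super_paths V E u v (f {u, v})"
begin

lemma f_le_card_neighbors:
  assumes "u \<in> V" "v \<in> V" "u \<noteq> v"
  shows "f {u, v} \<le> card (neighbors E u \<inter> {y. 2 \<le> degree E y} - {v})"
  using disjoint_super_paths_le_card_neighbors[OF paths[OF assms]] .

lemma f_le_mG:
  assumes "u \<in> V" "v \<in> V" "u \<noteq> v"
  shows "f {u, v} \<le> mG E {u, v}"
proof -
  have "card (neighbors E x \<inter> {y. 2 \<le> degree E y} - {z}) \<le> card (neighbors E x - {z})" for x z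
    by (intro card_mono) (auto simp: finite_neighbors)
  then have bound: "card (neighbors E x \<inter> {y. 2 \<le> degree E y} - {z})
      \<le> degree E x - (if {x, z} \<in> E then 1 else 0)" for x z
    by (simp only: card_neighbors_minus)
  have "f {u, v} \<le> degree E u - (if {u, v} \<in> E then 1 else 0)"
    using le_trans[OF f_le_card_neighbors[OF assms] bound] .
  moreover have "f {v, u} \<le> degree E v - (if {v, u} \<in> E then 1 else 0)"
    using le_trans[OF f_le_card_neighbors[OF assms(2,1) assms(3)[symmetric]] bound] .
  ultimately show ?thesis
    by (simp add: mG_def insert_commute Let_def min_def split: if_splits)
qed

lemma weight_le_weight_mG: "weight V f \<le> weight V (mG E)"
  unfolding weight_def
proof (rule sum_mono)
  fix e assume "e \<in> {e. e \<subseteq> V \<and> card e = 2}"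
  then obtain u v where "e = {u, v}" "u \<noteq> v" "u \<in> V" "v \<in> V"
    by (auto simp: card_2_iff)
  then show "f e \<le> mG E e"
    using f_le_mG by simp
qed

lemma weight_le_choose_degree:
  assumes "c \<in> V" and low: "\<And>v. v \<in> V - {c} \<Longrightarrow> degree E v \<le> 1"
  shows "weight V f \<le> degree E c choose 2"
proof -
  \<comment> \<open>Only c can be the second vertex of a super-path.\<close>
  have high: "card (neighbors E u \<inter> {y. 2 \<le> degree E y} - {v}) \<le> (if u \<in> neighbors E c then 1 else 0)"
    for u v
  proof -
    have "neighbors E u \<inter> {y. 2 \<le> degree E y} - {v} \<subseteq> {c} \<inter> neighbors E u"
      using neighbors_subset low by fastforce
    then have "card (neighbors E u \<inter> {y. 2 \<le> degree E y} - {v}) \<le> card ({c} \<inter> neighbors E u)"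
      by (intro card_mono) auto
    moreover have "{c} \<inter> neighbors E u = (if u \<in> neighbors E c then {c} else {})"
      using neighbors_sym[of c E u] by auto
    ultimately show ?thesis
      by (simp split: if_splits)
  qed
  have "f e \<le> (if e \<subseteq> neighbors E c then 1 else 0)" if "e \<in> {e. e \<subseteq> V \<and> card e = 2}" for e
  proof -
    from that obtain u v where "e = {u, v}" "u \<noteq> v" "u \<in> V" "v \<in> V"
      by (auto simp: card_2_iff)
    then show ?thesis
      using f_le_card_neighbors[of u v] f_le_card_neighbors[of v u] high[of u v] high[of v u]
      by (auto simp: insert_commute)
  qed
  then have "weight V f \<le> (\<Sum>e\<in>{e. e \<subseteq> V \<and> card e = 2}. if e \<subseteq> neighbors E c then 1 else 0)"
    unfolding weight_def by (rule sum_mono)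
  also have "\<dots> = card {e \<in> {e. e \<subseteq> V \<and> card e = 2}. e \<subseteq> neighbors E c}"
    using finite_vertices by (simp add: sum.inter_filter[symmetric])
  also have "{e \<in> {e. e \<subseteq> V \<and> card e = 2}. e \<subseteq> neighbors E c} = {e. e \<subseteq> neighbors E c \<and> card e = 2}"
    using neighbors_subset by blast
  also have "card \<dots> = degree E c choose 2"
    by (simp add: n_subsets finite_neighbors degree_eq_card_neighbors)
  finally show ?thesis .
qed

lemma weight_le_edges_minus_spread:
  "real (weight V f) \<le> (real (card V) - 2) * real (card E) - spread V (degree E) / 4"
  using weight_le_weight_mG weight_mG_eq by (metis of_nat_le_iff)

lemma weight_le_if_one_vertex_of_degree_ge_2:
  assumes "3 \<le> card V" "c \<in> V" "degree E c \<le> 2" "\<And>v. v \<in> V - {c} \<Longrightarrow> degree E v \<le> 1"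
  shows "weight V f \<le> (card E - 1) * (card V - 2)"
proof (cases "degree E c = 2")
  case True
  have "degree E c \<le> card E"
    unfolding degree_def using finite_edges by (intro card_mono) auto
  then have "1 \<le> card E - 1" "1 \<le> card V - 2"
    using True assms(1) by linarith+
  then have "1 * 1 \<le> (card E - 1) * (card V - 2)"
    by (rule mult_le_mono)
  moreover have "weight V f \<le> 1"
    using weight_le_choose_degree[OF assms(2,4)] True by simp
  ultimately show ?thesis
    by linarith
next
  case False
  then have "degree E c choose 2 = 0"
    using assms(3) by simp
  then have "weight V f = 0"
    using weight_le_choose_degree[OF assms(2,4)] by linarith
  then show ?thesis
    by simp
qed

text \<open>
  Given part (a), the hypothesis (e(G) - 1) (n - 2) < w(f) below is equivalent to
  e(G) = \<lceil>w(f) / (n - 2)\<rceil>, the equality case of the theorem.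
\<close>

lemma tight_imp_small_spread:
  assumes "3 \<le> card V" and tight: "(card E - 1) * (card V - 2) < weight V f"
  shows "spread V (degree E) < 4 * (real (card V) - 2)"
proof -
  have bound: "real (weight V f) \<le> (real (card V) - 2) * real (card E) - spread V (degree E) / 4"
    by (rule weight_le_edges_minus_spread)
  have "card E \<noteq> 0"
  proof
    assume "card E = 0"
    then have "real (weight V f) \<le> 0"
      using bound spread_nonneg[of V "degree E"] by simp
    then show False
      using tight by simp
  qed
  then have "real ((card E - 1) * (card V - 2)) = (real (card E) - 1) * (real (card V) - 2)"
    using assms(1) by simp
  also have "\<dots> = (real (card V) - 2) * real (card E) - (real (card V) - 2)"
    by (simp add: algebra_simps)
  finally have "(real (card V) - 2) * real (card E) - (real (card V) - 2) < real (weight V f)"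
    using tight by (metis of_nat_less_iff)
  then show ?thesis
    using bound by (simp add: algebra_simps)
qed

lemma tight_regular:
  assumes n: "3 \<le> card V" and tight: "(card E - 1) * (card V - 2) < weight V f"
    and regular: "max_degree V E = min_degree V E"
  shows "2 \<le> min_degree V E" "real (weight V (mG E)) = (real (card V) - 2) * real (card E)"
proof -
  have const: "degree E v = min_degree V E" if "v \<in> V" for v
    using min_degree_le[OF that] degree_le_max_degree[OF that] regular by simp
  then have "spread V (degree E) = 0"
    by (simp add: spread_def)
  then show "real (weight V (mG E)) = (real (card V) - 2) * real (card E)"
    by (simp add: weight_mG_eq)
  obtain c where "c \<in> V"
    using n by fastforce
  show "2 \<le> min_degree V E"
  proof (rule ccontr)
    assume "\<not> 2 \<le> min_degree V E"
    then have "weight V f \<le> (card E - 1) * (card V - 2)"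
      using const \<open>c \<in> V\<close> by (intro weight_le_if_one_vertex_of_degree_ge_2[OF n, of c]) auto
    then show False
      using tight by simp
  qed
qed

lemma tight_irregular:
  assumes n: "3 \<le> card V" and tight: "(card E - 1) * (card V - 2) < weight V f"
    and irregular: "max_degree V E \<noteq> min_degree V E"
  shows "max_degree V E = min_degree V E + 1"
    "(card {v \<in> V. degree E v = min_degree V E} = 1 \<and> 3 \<le> max_degree V E \<and> 2 \<le> min_degree V E)
     \<or> (card {v \<in> V. degree E v = max_degree V E} = 1 \<and> 4 \<le> max_degree V E \<and> 3 \<le> min_degree V E)"
    "real (weight V (mG E)) = (real (card V) - 2) * real (card E) - (real (card V) - 1) / 2"
    "4 \<le> card V"
proof -
  have "degree E ` V \<noteq> {}" "finite (degree E ` V)"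
    using n finite_vertices by auto
  then have "min_degree V E \<in> degree E ` V" "max_degree V E \<in> degree E ` V"
    unfolding min_degree_def max_degree_def by simp_all
  then obtain a b where "a \<in> V" "b \<in> V" "degree E a \<noteq> degree E b"
    using irregular by force
  then obtain c d0 where c: "c \<in> V" and others: "\<And>v. v \<in> V - {c} \<Longrightarrow> degree E v = d0"
    and step: "degree E c = d0 + 1 \<or> d0 = degree E c + 1"
    and spread: "spread V (degree E) = 2 * (real (card V) - 1)" and n4: "4 \<le> card V"
    using small_spread_imp_near_regular[OF finite_vertices n tight_imp_small_spread[OF n tight]] by metis
  have handshake: "degree E c + (card V - 1) * d0 = 2 * card E"
    using sum_single_outlier[OF finite_vertices c, of "degree E"] others sum_degree_eq by simp
  have "3 \<le> d0"
  proof (rule ccontr)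
    assume "\<not> 3 \<le> d0"
    then consider "d0 \<le> 1" | "d0 = 2"
      by linarith
    then show False
    proof cases
      case 1
      then have "degree E c \<le> 2"
        using step by linarith
      moreover have "degree E v \<le> 1" if "v \<in> V - {c}" for v
        using 1 others[OF that] by simp
      ultimately have "weight V f \<le> (card E - 1) * (card V - 2)"
        by (rule weight_le_if_one_vertex_of_degree_ge_2[OF n c])
      then show False
        using tight by simp
    next
      case 2
      then show False
        using handshake step by presburger
    qed
  qed
  have "degree E c \<noteq> d0"
    using step by auto
  note degrees = degrees_of_single_outlier[OF c others _ this]
  show "max_degree V E = min_degree V E + 1"
    using degrees n step by auto
  show "(card {v \<in> V. degree E v = min_degree V E} = 1 \<and> 3 \<le> max_degree V E \<and> 2 \<le> min_degree V E)
     \<or> (card {v \<in> V. degree E v = max_degree V E} = 1 \<and> 4 \<le> max_degree V E \<and> 3 \<le> min_degree V E)"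
    using step
  proof
    assume "degree E c = d0 + 1"
    then show ?thesis
      using degrees n \<open>3 \<le> d0\<close> by (simp add: max_def min_def)
  next
    assume "d0 = degree E c + 1"
    then show ?thesis
      using degrees n \<open>3 \<le> d0\<close> by (simp add: max_def min_def)
  qed
  show "real (weight V (mG E)) = (real (card V) - 2) * real (card E) - (real (card V) - 1) / 2"
    using weight_mG_eq spread by simp
  show "4 \<le> card V"
    by (fact n4)
qed

lemma tight_imp_degree_structure:
  assumes n: "3 \<le> card V" and tight: "(card E - 1) * (card V - 2) < weight V f"
  shows "max_degree V E - min_degree V E \<le> 1
         \<and> ((max_degree V E = min_degree V E \<and> min_degree V E \<ge> 2)
            \<or> (card {v \<in> V. degree E v = min_degree V E} = 1 \<and> max_degree V E \<ge> 3 \<and> min_degree V E \<ge> 2)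
            \<or> (card {v \<in> V. degree E v = max_degree V E} = 1 \<and> max_degree V E \<ge> 4 \<and> min_degree V E \<ge> 3))
         \<and> int (card E) = \<lceil>real (weight V (mG E)) / real (card V - 2)\<rceil>
         \<and> real (card E) = (real (weight V (mG E))
              + (if max_degree V E = min_degree V E then 0 else (real (card V) - 1) / 2))
              / real (card V - 2)"
proof -
  have N: "real (card V - 2) = real (card V) - 2" "0 < real (card V) - 2"
    using n by auto
  show ?thesis
  proof (cases "max_degree V E = min_degree V E")
    case True
    then show ?thesis
      using ceiling_divide_eq_of_deficit[OF N(2), of 0] tight_regular[OF n tight True] N by auto
  next
    case False
    note irregular = tight_irregular[OF n tight False]
    have "(real (card V) - 1) / 2 < real (card V) - 2"
      using irregular(4) by simp
    then show ?thesis
      using ceiling_divide_eq_of_deficit[OF N(2), of "(real (card V) - 1) / 2"] irregular False N(1)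
      by auto
  qed
qed

end

end

theorem lemma2p11:
  fixes V :: "'a set" and E :: "'a set set" and f :: "'a set \<Rightarrow> nat"
  assumes G: "simple_graph V E"
    and n: "card V \<ge> 3"
    and paths: "\<And>u v. u \<in> V \<Longrightarrow> v \<in> V \<Longrightarrow> u \<noteq> v \<Longrightarrow>
                  has_disjoint_super_paths V E u v (f {u, v})"
  shows "int (card E) \<ge> \<lceil>real (weight V f) / real (card V - 2)\<rceil>
    \<and> (card E \<ge> 1 \<longrightarrow> int (card E) = \<lceil>real (weight V f) / real (card V - 2)\<rceil> \<longrightarrow>
         max_degree V E - min_degree V E \<le> 1
         \<and> ((max_degree V E = min_degree V E \<and> min_degree V E \<ge> 2)
            \<or> (card {v \<in> V. degree E v = min_degree V E} = 1 \<and> max_degree V E \<ge> 3 \<and> min_degree V E \<ge> 2)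
            \<or> (card {v \<in> V. degree E v = max_degree V E} = 1 \<and> max_degree V E \<ge> 4 \<and> min_degree V E \<ge> 3))
         \<and> int (card E) = \<lceil>real (weight V (mG E)) / real (card V - 2)\<rceil>
         \<and> real (card E) = (real (weight V (mG E))
              + (if max_degree V E = min_degree V E then 0 else (real (card V) - 1) / 2))
              / real (card V - 2))"
proof -
  have N: "real (card V - 2) = real (card V) - 2" "0 < real (card V) - 2"
    using n by auto
  have "real (weight V f) \<le> (real (card V) - 2) * real (card E)"
    using weight_le_edges_minus_spread[OF G paths] spread_nonneg[of V "degree E"] by linarith
  then have part_a: "int (card E) \<ge> \<lceil>real (weight V f) / real (card V - 2)\<rceil>"
    using N by (simp add: ceiling_le_iff divide_le_eq mult.commute)
  have tight: "(card E - 1) * (card V - 2) < weight V f"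
    if "card E \<ge> 1" "int (card E) = \<lceil>real (weight V f) / real (card V - 2)\<rceil>"
    using n that by (intro less_of_ceiling_divide_eq) auto
  show ?thesis
    using part_a tight tight_imp_degree_structure[OF G paths n] by blast
qed

end
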